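(* Let $\mathcal P$ be a family of non-zero real polynomials with no constant term, and let $X\subset\mathbb R$, with $|\mathcal P|<\mathfrak{c}$ and $|X|<\mathfrak{c}$. Then there exists a set $Y=\{y_\xi:\xi<\mathfrak{c}\}\subset\mathbb R$ such that $P(y_{\xi_1},y_{\xi_2},\ldots,y_{\xi_n})\notin X$ for every $n\ge1$, every polynomial $P\in\mathcal P$ in $n$ variables and every choice of pairwise distinct ordinals $\xi_1,\dots,\xi_n<\mathfrak{c}$.
   Context: $\mathfrak{c}$ denotes the cardinality of $\mathbb R$, identified with the first ordinal of that cardinality. *)

theory Defs
  imports Complex_Main "HOL-Library.Poly_Mapping" "HOL-Library.Equipollence"
begin

text \<open>Real multivariate polynomials in the variables x_0, x_1, ... are represented as
finitely supported maps from monomials (finitely supported exponent vectors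
to real coefficients.\<close>

type_synonym rpoly = "(nat \<Rightarrow>\<^sub>0 nat) \<Rightarrow>\<^sub>0 real"

definition mono_eval :: "(nat \<Rightarrow>\<^sub>0 nat) \<Rightarrow> (nat \<Rightarrow> real) \<Rightarrow> real" where
  "mono_eval m v = (\<Prod>i\<in>Poly_Mapping.keys m. v i ^ Poly_Mapping.lookup m i)"

definition poly_eval :: "rpoly \<Rightarrow> (nat \<Rightarrow> real) \<Rightarrow> real" where
  "poly_eval P v = (\<Sum>m\<in>Poly_Mapping.keys P. Poly_Mapping.lookup P m * mono_eval m v)"

definition poly_in_vars :: "nat \<Rightarrow> rpoly \<Rightarrow> bool" where
  "poly_in_vars n P \<longleftrightarrow> (\<forall>m\<in>Poly_Mapping.keys P. Poly_Mapping.keys m \<subseteq> {..<n})"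

end

theory Submission
  imports Defs "HOL-Analysis.Continuum_Not_Denumerable" "HOL-Computational_Algebra.Polynomial"
begin

text \<open>Let \<open>D\<close> be the set of coefficients of the polynomials in \<open>\<P>\<close> together with the negatives
  of the elements of \<open>X\<close>; it has size less than the continuum. It suffices to find a set \<open>T\<close> of
  reals of size continuum at whose distinct points no nonzero polynomial with coefficients in \<open>D\<close>
  vanishes: as \<open>P\<close> has no constant term, \<open>P(y\<^sub>1, \<dots>, y\<^sub>n) = x \<in> X\<close> makes \<open>P - x\<close> such a polynomial.
  Take \<open>T\<close> maximal by Zorn's lemma. If \<open>T\<close> were smaller than the continuum, then so would be
  the set of roots of nonzero univariate polynomials whose coefficients are values of polynomials
  over \<open>D\<close> at points of \<open>T\<close>, and any real outside this set could be added to \<open>T\<close>.\<close>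

unbundle cardinal_syntax

section \<open>Sets of size less than the continuum\<close>

abbreviation small :: "'a set \<Rightarrow> bool" where
  "small A \<equiv> A \<prec> (UNIV :: real set)"

lemma small_iff_ordLess: "small A \<longleftrightarrow> |A| <o |UNIV :: real set|"
proof
  assume "small A"
  then have "\<not> (UNIV :: real set) \<lesssim> A"
    by (meson lepoll_antisym lesspoll_def)
  then show "|A| <o |UNIV :: real set|"
    using card_of_ordLess[of "UNIV :: real set" A] unfolding lepoll_def by blast
next
  assume less: "|A| <o |UNIV :: real set|"
  then have "A \<lesssim> (UNIV :: real set)"
    using card_of_ordLeq ordLess_imp_ordLeq unfolding lepoll_def by blast
  moreover have "\<not> A \<approx> (UNIV :: real set)"
    using less eqpoll_iff_card_of_ordIso not_ordLess_ordIso by blast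
  ultimately show "small A"
    by (simp add: lesspoll_def)
qed

lemma small_countable:
  assumes "countable A"
  shows "small A"
proof -
  obtain f :: "'a \<Rightarrow> nat" where "inj_on f A"
    using assms by (auto simp: countable_def)
  then have "A \<lesssim> (UNIV :: real set)"
    unfolding lepoll_def by (intro exI[of _ "real \<circ> f"]) (simp add: inj_on_def)
  moreover have "\<not> A \<approx> (UNIV :: real set)"
    using assms countable_eqpoll eqpoll_sym uncountable_UNIV_real by blast
  ultimately show ?thesis
    by (simp add: lesspoll_def)
qed

lemma small_finite: "finite A \<Longrightarrow> small A"
  by (rule small_countable[OF countable_finite])

lemma small_subset: "small A \<Longrightarrow> B \<subseteq> A \<Longrightarrow> small B"
  by (meson lesspoll_trans1 subset_imp_lepoll)

lemma small_image: "small A \<Longrightarrow> small (f ` A)"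
  by (meson image_lepoll lesspoll_trans1)

lemma small_Un: "small A \<Longrightarrow> small B \<Longrightarrow> small (A \<union> B)"
  using card_of_Un_ordLess_infinite[OF infinite_UNIV_char_0] by (simp add: small_iff_ordLess)

lemma small_insert: "small A \<Longrightarrow> small (insert a A)"
  using small_Un[OF small_finite[of "{a}"]] by simp

lemma small_UN_finite:
  assumes "small I" and "\<And>i. i \<in> I \<Longrightarrow> finite (F i)"
  shows "small (\<Union>i\<in>I. F i)"
proof (cases "finite I")
  case True
  then show ?thesis
    by (intro small_finite finite_UN_I assms(2))
next
  case False
  have "\<forall>i\<in>I. |F i| \<le>o |I|"
  proof
    fix i
    assume "i \<in> I"
    have "|F i| <o |I|"
      by (rule finite_ordLess_infinite[OF card_of_Well_order card_of_Well_order])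
        (use assms(2) \<open>i \<in> I\<close> False in \<open>simp_all add: Field_card_of\<close>)
    then show "|F i| \<le>o |I|"
      by (rule ordLess_imp_ordLeq)
  qed
  then have "|\<Union>i\<in>I. F i| \<le>o |I|"
    by (rule card_of_UNION_ordLeq_infinite[OF False ordIso_imp_ordLeq[OF card_of_refl]])
  with assms(1) show ?thesis
    unfolding small_iff_ordLess using ordLeq_ordLess_trans by blast
qed

lemma card_of_lists_ordLeq_infinite:
  assumes "infinite A"
  shows "|lists A| \<le>o |A|"
proof -
  define L where "L n = {l \<in> lists A. length l = n}" for n
  have "|L n| \<le>o |A|" for n
  proof (induction n)
    case 0
    have "L 0 = {[]}"
      by (auto simp: L_def)
    moreover have "A \<noteq> {}"
      using assms by auto
    ultimately show ?case
      by (simp add: card_of_singl_ordLeq)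
  next
    case (Suc n)
    have "L (Suc n) \<subseteq> (\<lambda>(a, l). a # l) ` (A \<times> L n)"
      by (auto simp: L_def length_Suc_conv)
    then have "|L (Suc n)| \<le>o |A \<times> L n|"
      using ordLeq_transitive[OF card_of_mono1 card_of_image] by blast
    also have "|A \<times> L n| \<le>o |A \<times> A|"
      using Suc card_of_Times_mono2 by blast
    also have "|A \<times> A| =o |A|"
      using assms card_of_Times_same_infinite by blast
    finally show ?case .
  qed
  moreover have "|UNIV :: nat set| \<le>o |A|"
    using assms infinite_iff_card_of_nat by blast
  moreover have "lists A = (\<Union>n. L n)"
    by (auto simp: L_def)
  ultimately show ?thesis
    using card_of_UNION_ordLeq_infinite[OF assms, of UNIV L] by simp
qed

lemma small_lists:
  assumes "small A"
  shows "small (lists A)"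
proof (cases "finite A")
  case True
  then show ?thesis
    by (intro small_countable countable_lists countable_finite)
next
  case False
  with assms show ?thesis
    unfolding small_iff_ordLess using card_of_lists_ordLeq_infinite ordLeq_ordLess_trans by blast
qed

section \<open>Algebraic independence over a set of coefficients\<close>

abbreviation monomial_vars :: "(nat \<Rightarrow>\<^sub>0 nat) set \<Rightarrow> nat set" where
  "monomial_vars M \<equiv> \<Union> (Poly_Mapping.keys ` M)"

text \<open>A polynomial is given by a finite set \<open>M\<close> of monomials and a coefficient function \<open>c\<close>
  rather than as a poly mapping, so that its monomials can be regrouped freely.\<close>

definition alg_indep_over :: "real set \<Rightarrow> real set \<Rightarrow> bool" where
  "alg_indep_over D T \<longleftrightarrow>
     (\<forall>M c w. finite M \<longrightarrow> c ` M \<subseteq> D \<longrightarrow> (\<exists>m\<in>M. c m \<noteq> 0) \<longrightarrow>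
        inj_on w (monomial_vars M) \<longrightarrow> w ` monomial_vars M \<subseteq> T \<longrightarrow>
        (\<Sum>m\<in>M. c m * mono_eval m w) \<noteq> 0)"

lemma alg_indep_overD:
  assumes "alg_indep_over D T" "finite M" "c ` M \<subseteq> D" "m \<in> M" "c m \<noteq> 0"
    and "inj_on w (monomial_vars M)" "w ` monomial_vars M \<subseteq> T"
  shows "(\<Sum>m\<in>M. c m * mono_eval m w) \<noteq> 0"
  using assms(1)[unfolded alg_indep_over_def, rule_format,
      OF assms(2,3) bexI[where P = "\<lambda>m. c m \<noteq> 0", OF assms(5,4)] assms(6,7)] .

lemma alg_indep_over_empty: "alg_indep_over D {}"
  unfolding alg_indep_over_def
proof (intro allI impI)
  fix M c and w :: "nat \<Rightarrow> real"
  assume "finite M" "c ` M \<subseteq> D" "\<exists>m\<in>M. c m \<noteq> 0" "inj_on w (monomial_vars M)"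
    and "w ` monomial_vars M \<subseteq> {}"
  then have "M = {0}" "c 0 \<noteq> 0"
    by auto
  then show "(\<Sum>m\<in>M. c m * mono_eval m w) \<noteq> 0"
    by (simp add: mono_eval_def)
qed

lemma alg_indep_over_subset:
  assumes "alg_indep_over D T" "S \<subseteq> T"
  shows "alg_indep_over D S"
  unfolding alg_indep_over_def
proof (intro allI impI)
  fix M c and w :: "nat \<Rightarrow> real"
  assume M: "finite M" "c ` M \<subseteq> D" "\<exists>m\<in>M. c m \<noteq> 0" "inj_on w (monomial_vars M)"
    "w ` monomial_vars M \<subseteq> S"
  then obtain m where "m \<in> M" "c m \<noteq> 0"
    by blast
  then show "(\<Sum>m\<in>M. c m * mono_eval m w) \<noteq> 0"
    using M(5) assms(2) by (intro alg_indep_overD[OF assms(1) M(1,2) _ _ M(4)]) auto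
qed

lemma alg_indep_over_finite_subsets:
  assumes "\<And>F. F \<subseteq> T \<Longrightarrow> finite F \<Longrightarrow> alg_indep_over D F"
  shows "alg_indep_over D T"
  unfolding alg_indep_over_def
proof (intro allI impI)
  fix M c and w :: "nat \<Rightarrow> real"
  assume M: "finite M" "c ` M \<subseteq> D" "\<exists>m\<in>M. c m \<noteq> 0" "inj_on w (monomial_vars M)"
    "w ` monomial_vars M \<subseteq> T"
  obtain m where "m \<in> M" "c m \<noteq> 0"
    using M(3) by blast
  have "alg_indep_over D (w ` monomial_vars M)"
    using M(1,5) by (intro assms) auto
  then show "(\<Sum>m\<in>M. c m * mono_eval m w) \<noteq> 0"
    by (rule alg_indep_overD[OF _ M(1,2) \<open>m \<in> M\<close> \<open>c m \<noteq> 0\<close> M(4)]) simp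
qed

lemma alg_indep_over_Union_chain:
  assumes "C \<noteq> {}" and chain: "subset.chain {T. alg_indep_over D T} C"
  shows "alg_indep_over D (\<Union>C)"
proof (rule alg_indep_over_finite_subsets)
  fix F
  assume "F \<subseteq> \<Union>C" "finite F"
  then obtain T where "T \<in> C" "F \<subseteq> T"
    using finite_subset_Union_chain[OF _ _ assms] by metis
  with chain show "alg_indep_over D F"
    by (auto simp: subset.chain_def intro: alg_indep_over_subset)
qed

definition monomial_sum_values :: "real set \<Rightarrow> real set \<Rightarrow> real set" where
  "monomial_sum_values D T =
     {\<Sum>m\<in>M. c m * mono_eval m w | M c w. finite M \<and> c ` M \<subseteq> D \<and> w ` monomial_vars M \<subseteq> T}"

lemma prod_list_concat: "prod_list (concat xss) = prod_list (map prod_list xss)"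
  by (induction xss) simp_all

lemma mono_eval_conv_prod_list:
  "mono_eval m w = prod_list (concat (map (\<lambda>i. replicate (Poly_Mapping.lookup m i) (w i))
     (sorted_list_of_set (Poly_Mapping.keys m))))"
  unfolding mono_eval_def prod_list_concat map_map
  using prod.distinct_set_conv_list[of "sorted_list_of_set (Poly_Mapping.keys m)"
      "\<lambda>i. w i ^ Poly_Mapping.lookup m i"]
  by (simp add: comp_def)

lemma small_monomial_sum_values:
  assumes "small D" "small T"
  shows "small (monomial_sum_values D T)"
proof -
  define row :: "((nat \<Rightarrow>\<^sub>0 nat) \<Rightarrow> real) \<Rightarrow> (nat \<Rightarrow> real) \<Rightarrow> (nat \<Rightarrow>\<^sub>0 nat) \<Rightarrow> real list" where
    "row c w m = c m # concat (map (\<lambda>i. replicate (Poly_Mapping.lookup m i) (w i))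
       (sorted_list_of_set (Poly_Mapping.keys m)))" for c w m
  have "monomial_sum_values D T \<subseteq> (\<lambda>L. sum_list (map prod_list L)) ` lists (lists (D \<union> T))"
  proof
    fix v
    assume "v \<in> monomial_sum_values D T"
    then obtain M c w where v: "v = (\<Sum>m\<in>M. c m * mono_eval m w)"
      and M: "finite M" "c ` M \<subseteq> D" "w ` monomial_vars M \<subseteq> T"
      unfolding monomial_sum_values_def mem_Collect_eq by (elim exE conjE) (rule that)
    obtain ms where ms: "set ms = M" "distinct ms"
      using finite_distinct_list[OF M(1)] by blast
    have "prod_list (row c w m) = c m * mono_eval m w" for m
      by (simp add: row_def mono_eval_conv_prod_list)
    then have "v = sum_list (map prod_list (map (row c w) ms))"
      using ms by (simp add: v comp_def sum_list_distinct_conv_sum_set)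
    moreover have "w i \<in> T" if "m \<in> M" "i \<in> Poly_Mapping.keys m" for m i
      using M(3) that by blast
    then have "set (row c w m) \<subseteq> D \<union> T" if "m \<in> M" for m
      using that M(2) by (auto simp: row_def)
    then have "map (row c w) ms \<in> lists (lists (D \<union> T))"
      using ms(1) by (auto simp: lists_eq_set)
    ultimately show "v \<in> (\<lambda>L. sum_list (map prod_list L)) ` lists (lists (D \<union> T))"
      by blast
  qed
  moreover have "small ((\<lambda>L. sum_list (map prod_list L)) ` lists (lists (D \<union> T)))"
    by (intro small_image small_lists small_Un assms)
  ultimately show ?thesis
    by (rule small_subset[rotated])
qed

definition algebraic_over :: "real set \<Rightarrow> real set" where
  "algebraic_over V = {t. \<exists>p. p \<noteq> 0 \<and> set (coeffs p) \<subseteq> V \<and> poly p t = 0}"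

lemma small_algebraic_over:
  assumes "small V"
  shows "small (algebraic_over V)"
proof -
  have "algebraic_over V \<subseteq> (\<Union>p\<in>Poly ` lists V - {0}. {t. poly p t = 0})"
    unfolding algebraic_over_def by (force simp: lists_eq_set)
  moreover have "small (\<Union>p\<in>Poly ` lists V - {0}. {t. poly p t = 0})"
  proof (rule small_UN_finite)
    show "small (Poly ` lists V - {0})"
      by (rule small_subset[OF small_image[OF small_lists[OF assms]]]) blast
  qed (simp add: poly_roots_finite)
  ultimately show ?thesis
    by (rule small_subset[rotated])
qed

lemma algebraic_overI:
  assumes "finite K" "k \<in> K" "a k \<noteq> 0" "a ` K \<subseteq> V" "(\<Sum>k\<in>K. a k * t ^ k) = 0"
  shows "t \<in> algebraic_over (insert 0 V)"
proof -
  define p where "p = (\<Sum>k\<in>K. monom (a k) k)"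
  have coeff_p: "coeff p n = (if n \<in> K then a n else 0)" for n
    unfolding p_def coeff_sum coeff_monom using assms(1) by (simp add: sum.delta)
  have "p \<noteq> 0"
    using coeff_p[of k] assms(2,3) by auto
  moreover have "set (coeffs p) \<subseteq> range (coeff p)"
    by (simp add: range_coeff subset_insertI)
  moreover have "range (coeff p) \<subseteq> insert 0 V"
    using coeff_p assms(4) by auto
  moreover have "poly p t = 0"
    using assms(5) by (simp add: p_def poly_sum poly_monom)
  ultimately show ?thesis
    unfolding algebraic_over_def by auto
qed

definition remove_var :: "nat \<Rightarrow> (nat \<Rightarrow>\<^sub>0 nat) \<Rightarrow> (nat \<Rightarrow>\<^sub>0 nat)" where
  "remove_var j m = m - Poly_Mapping.single j (Poly_Mapping.lookup m j)"

lemma lookup_remove_var: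
  "Poly_Mapping.lookup (remove_var j m) i = (if i = j then 0 else Poly_Mapping.lookup m i)"
  by (simp add: remove_var_def lookup_minus lookup_single)

lemma keys_remove_var: "Poly_Mapping.keys (remove_var j m) = Poly_Mapping.keys m - {j}"
  by (auto simp: in_keys_iff lookup_remove_var split: if_splits)

lemma remove_var_add_single: "remove_var j m + Poly_Mapping.single j (Poly_Mapping.lookup m j) = m"
  by (rule poly_mapping_eqI) (simp add: lookup_add lookup_remove_var lookup_single)

lemma mono_eval_remove_var:
  "mono_eval m w = w j ^ Poly_Mapping.lookup m j * mono_eval (remove_var j m) w"
proof (cases "j \<in> Poly_Mapping.keys m")
  case True
  then have "mono_eval m w =
      w j ^ Poly_Mapping.lookup m j * (\<Prod>i\<in>Poly_Mapping.keys m - {j}. w i ^ Poly_Mapping.lookup m i)"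
    unfolding mono_eval_def by (simp add: prod.remove)
  also have "(\<Prod>i\<in>Poly_Mapping.keys m - {j}. w i ^ Poly_Mapping.lookup m i) = mono_eval (remove_var j m) w"
    unfolding mono_eval_def keys_remove_var by (rule prod.cong) (auto simp: lookup_remove_var)
  finally show ?thesis .
next
  case False
  then show ?thesis
    by (simp add: remove_var_def in_keys_iff)
qed

lemma monomial_sum_regroup:
  assumes "finite M"
  shows "(\<Sum>m\<in>M. c m * mono_eval m w) =
    (\<Sum>k\<in>(\<lambda>m. Poly_Mapping.lookup m j) ` M.
       (\<Sum>m'\<in>remove_var j ` {m\<in>M. Poly_Mapping.lookup m j = k}.
          c (m' + Poly_Mapping.single j k) * mono_eval m' w) * w j ^ k)"
proof -
  have "(\<Sum>m\<in>M. c m * mono_eval m w) =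
      (\<Sum>k\<in>(\<lambda>m. Poly_Mapping.lookup m j) ` M.
         \<Sum>m\<in>{m\<in>M. Poly_Mapping.lookup m j = k}. c m * mono_eval m w)"
    using assms by (rule sum.image_gen)
  also have "\<dots> = (\<Sum>k\<in>(\<lambda>m. Poly_Mapping.lookup m j) ` M.
       (\<Sum>m'\<in>remove_var j ` {m\<in>M. Poly_Mapping.lookup m j = k}.
          c (m' + Poly_Mapping.single j k) * mono_eval m' w) * w j ^ k)"
  proof (rule sum.cong[OF refl])
    fix k
    let ?Mk = "{m\<in>M. Poly_Mapping.lookup m j = k}"
    have "inj_on (remove_var j) ?Mk"
      by (rule inj_onI) (metis (mono_tags, lifting) mem_Collect_eq remove_var_add_single)
    moreover have "c m * mono_eval m w =
        c (remove_var j m + Poly_Mapping.single j k) * mono_eval (remove_var j m) w * w j ^ k"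
      if "m \<in> ?Mk" for m
      using that mono_eval_remove_var[of m w j] remove_var_add_single[of j m] by simp
    ultimately show "(\<Sum>m\<in>?Mk. c m * mono_eval m w) =
        (\<Sum>m'\<in>remove_var j ` ?Mk. c (m' + Poly_Mapping.single j k) * mono_eval m' w) * w j ^ k"
      by (simp add: sum.reindex sum_distrib_right)
  qed
  finally show ?thesis .
qed

text \<open>The extension step: grouping the monomials of a vanishing polynomial by their degree in the
  variable evaluated at \<open>t\<close> exhibits \<open>t\<close> as a root of a nonzero univariate polynomial whose
  coefficients are values of polynomials over \<open>D\<close> at distinct points of \<open>T\<close>.\<close>

lemma alg_indep_over_insert:
  assumes indep: "alg_indep_over D T"
    and t: "t \<notin> algebraic_over (insert 0 (monomial_sum_values D T))"
  shows "alg_indep_over D (insert t T)"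
  unfolding alg_indep_over_def
proof (intro allI impI)
  fix M c and w :: "nat \<Rightarrow> real"
  assume M: "finite M" "c ` M \<subseteq> D" "\<exists>m\<in>M. c m \<noteq> 0" "inj_on w (monomial_vars M)"
    "w ` monomial_vars M \<subseteq> insert t T"
  obtain m0 where m0: "m0 \<in> M" "c m0 \<noteq> 0"
    using M(3) by blast
  show "(\<Sum>m\<in>M. c m * mono_eval m w) \<noteq> 0"
  proof (cases "t \<in> w ` monomial_vars M")
    case False
    with M(5) have "w ` monomial_vars M \<subseteq> T"
      by blast
    then show ?thesis
      by (rule alg_indep_overD[OF indep M(1,2) m0 M(4)])
  next
    case True
    then obtain j where j: "j \<in> monomial_vars M" "w j = t"
      by blast
    define Mk where "Mk k = remove_var j ` {m\<in>M. Poly_Mapping.lookup m j = k}" for k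
    define ck where "ck k m' = c (m' + Poly_Mapping.single j k)" for k m'
    define a where "a k = (\<Sum>m'\<in>Mk k. ck k m' * mono_eval m' w)" for k
    have fin: "finite (Mk k)" for k
      using M(1) by (simp add: Mk_def)
    have coeffs: "ck k ` Mk k \<subseteq> D" for k
      using M(2) by (auto simp: Mk_def ck_def remove_var_add_single)
    have vars: "monomial_vars (Mk k) \<subseteq> monomial_vars M - {j}" for k
      by (auto simp: Mk_def keys_remove_var)
    then have inj: "inj_on w (monomial_vars (Mk k))" for k
      using M(4) by (blast intro: inj_on_subset)
    have pts: "w ` monomial_vars (Mk k) \<subseteq> T" for k
    proof
      fix x
      assume "x \<in> w ` monomial_vars (Mk k)"
      then obtain i where i: "i \<in> monomial_vars (Mk k)" "x = w i"
        by blast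
      with vars have "i \<in> monomial_vars M" "i \<noteq> j"
        by auto
      with M(4) j(1) have "w i \<noteq> t"
        unfolding j(2)[symmetric] by (auto dest: inj_onD)
      with M(5) \<open>i \<in> monomial_vars M\<close> show "x \<in> T"
        unfolding i(2) by blast
    qed
    have a_in_values: "a k \<in> monomial_sum_values D T" for k
      unfolding a_def monomial_sum_values_def mem_Collect_eq
      by (intro exI[of _ "Mk k"] exI[of _ "ck k"] exI[of _ w] conjI refl fin coeffs pts)
    have "a (Poly_Mapping.lookup m0 j) \<noteq> 0"
      unfolding a_def
    proof (rule alg_indep_overD[OF indep fin coeffs _ _ inj pts])
      show "remove_var j m0 \<in> Mk (Poly_Mapping.lookup m0 j)"
        using m0(1) by (simp add: Mk_def)
      show "ck (Poly_Mapping.lookup m0 j) (remove_var j m0) \<noteq> 0"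
        using m0(2) by (simp add: ck_def remove_var_add_single)
    qed
    moreover have "(\<Sum>m\<in>M. c m * mono_eval m w) =
        (\<Sum>k\<in>(\<lambda>m. Poly_Mapping.lookup m j) ` M. a k * t ^ k)"
      using monomial_sum_regroup[OF M(1), of c w j] j(2) by (simp add: a_def Mk_def ck_def)
    ultimately show ?thesis
      using algebraic_overI[of "(\<lambda>m. Poly_Mapping.lookup m j) ` M" "Poly_Mapping.lookup m0 j" a
          "monomial_sum_values D T" t] M(1) m0(1) a_in_values t
      by auto
  qed
qed

lemma ex_alg_indep_over_eqpoll_UNIV:
  assumes "small D"
  obtains T where "alg_indep_over D T" "T \<approx> (UNIV :: real set)"
proof -
  have "\<exists>T\<in>{T. alg_indep_over D T}. \<forall>S\<in>{T. alg_indep_over D T}. T \<subseteq> S \<longrightarrow> S = T"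
    by (rule subset_Zorn_nonempty) (use alg_indep_over_empty alg_indep_over_Union_chain in auto)
  then obtain T where T: "alg_indep_over D T"
    and maximal: "\<And>S. alg_indep_over D S \<Longrightarrow> T \<subseteq> S \<Longrightarrow> S = T"
    by auto
  have "\<not> small T"
  proof
    assume "small T"
    then have "small (T \<union> algebraic_over (insert 0 (monomial_sum_values D T)))"
      using assms by (intro small_Un small_algebraic_over small_insert small_monomial_sum_values)
    then have "T \<union> algebraic_over (insert 0 (monomial_sum_values D T)) \<noteq> UNIV"
      by auto
    then obtain t where "t \<notin> T" and t: "t \<notin> algebraic_over (insert 0 (monomial_sum_values D T))"
      by blast
    have "insert t T = T"
      by (rule maximal[OF alg_indep_over_insert[OF T t] subset_insertI])
    with \<open>t \<notin> T\<close> show False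
      by blast
  qed
  then have "T \<approx> (UNIV :: real set)"
    using lepoll_iff_leqpoll subset_imp_lepoll[OF subset_UNIV] by blast
  with T show thesis
    by (rule that)
qed

lemma poly_eval_neq_of_alg_indep_over:
  assumes indep: "alg_indep_over D T"
    and P: "P \<noteq> 0" "Poly_Mapping.lookup P 0 = 0" "poly_in_vars n P"
    and D: "Poly_Mapping.lookup P ` Poly_Mapping.keys P \<subseteq> D" "- x \<in> D"
    and w: "inj_on w {..<n}" "w ` {..<n} \<subseteq> T"
  shows "poly_eval P w \<noteq> x"
proof
  assume eval: "poly_eval P w = x"
  define c where "c m = Poly_Mapping.lookup P m - (if m = 0 then x else 0)" for m
  have "0 \<notin> Poly_Mapping.keys P"
    using P(2) by (simp add: in_keys_iff)
  obtain m0 where m0: "m0 \<in> Poly_Mapping.keys P"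
    using P(1) by (metis all_not_in_conv keys_eq_empty)
  have vars: "monomial_vars (insert 0 (Poly_Mapping.keys P)) \<subseteq> {..<n}"
    using P(3) by (auto simp: poly_in_vars_def)
  have "(\<Sum>m\<in>insert 0 (Poly_Mapping.keys P). c m * mono_eval m w) \<noteq> 0"
  proof (rule alg_indep_overD[OF indep])
    show "c ` insert 0 (Poly_Mapping.keys P) \<subseteq> D"
      using D P(2) by (auto simp: c_def)
    show "c m0 \<noteq> 0"
      using m0 \<open>0 \<notin> Poly_Mapping.keys P\<close> by (auto simp: c_def in_keys_iff)
    show "inj_on w (monomial_vars (insert 0 (Poly_Mapping.keys P)))"
      using w(1) vars by (rule inj_on_subset)
    show "w ` monomial_vars (insert 0 (Poly_Mapping.keys P)) \<subseteq> T"
      using w(2) vars by blast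
  qed (use m0 in auto)
  moreover have "(\<Sum>m\<in>insert 0 (Poly_Mapping.keys P). c m * mono_eval m w) = poly_eval P w - x"
    using \<open>0 \<notin> Poly_Mapping.keys P\<close> P(2)
    by (auto simp: c_def poly_eval_def mono_eval_def intro!: sum.cong)
  ultimately show False
    using eval by simp
qed

theorem lemma2p5:
  fixes \<P> :: "rpoly set" and X :: "real set"
  assumes "\<forall>P\<in>\<P>. P \<noteq> 0 \<and> Poly_Mapping.lookup P 0 = 0"
    and "\<P> \<prec> (UNIV :: real set)"
    and "X \<prec> (UNIV :: real set)"
  shows "\<exists>y :: real \<Rightarrow> real. inj y \<and>
           (\<forall>n \<ge> 1. \<forall>P\<in>\<P>. poly_in_vars n P \<longrightarrow>
              (\<forall>\<xi> :: nat \<Rightarrow> real. inj_on \<xi> {..<n} \<longrightarrow>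
                 poly_eval P (\<lambda>i. y (\<xi> i)) \<notin> X))"
proof -
  define D where "D = (\<Union>P\<in>\<P>. Poly_Mapping.lookup P ` Poly_Mapping.keys P) \<union> uminus ` X"
  have "small D"
    unfolding D_def using assms(2,3) by (intro small_Un small_UN_finite small_image) simp_all
  then obtain T where T: "alg_indep_over D T" "T \<approx> (UNIV :: real set)"
    by (rule ex_alg_indep_over_eqpoll_UNIV)
  obtain y :: "real \<Rightarrow> real" where y: "bij_betw y UNIV T"
    using eqpoll_sym[OF T(2)] unfolding eqpoll_def by blast
  have "poly_eval P (\<lambda>i. y (\<xi> i)) \<notin> X"
    if P: "P \<in> \<P>" "poly_in_vars n P" and \<xi>: "inj_on \<xi> {..<n}" for n P \<xi>
  proof
    assume x: "poly_eval P (\<lambda>i. y (\<xi> i)) \<in> X"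
    have "poly_eval P (y \<circ> \<xi>) \<noteq> poly_eval P (\<lambda>i. y (\<xi> i))"
    proof (rule poly_eval_neq_of_alg_indep_over[OF T(1)])
      show "P \<noteq> 0" "Poly_Mapping.lookup P 0 = 0"
        using assms(1) P(1) by auto
      show "Poly_Mapping.lookup P ` Poly_Mapping.keys P \<subseteq> D" "- poly_eval P (\<lambda>i. y (\<xi> i)) \<in> D"
        using P(1) x by (auto simp: D_def)
      show "inj_on (y \<circ> \<xi>) {..<n}"
        using \<xi> bij_betw_imp_inj_on[OF y] by (auto intro: comp_inj_on inj_on_subset)
      show "(y \<circ> \<xi>) ` {..<n} \<subseteq> T"
        using bij_betw_imp_surj_on[OF y] by auto
    qed (rule P(2))
    then show False
      by (simp add: comp_def)
  qed
  then show ?thesis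
    by (intro exI[of _ y] conjI bij_betw_imp_inj_on[OF y] allI impI ballI)
qed

end
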